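(* Let $\psi:\mathbb{R}\to\mathbb{R}$ be a piecewise smooth function and let $\theta_1\neq\theta_2\in(0,\pi)$ be such that, for $i=1,2$: $\psi(s)\sin\theta_i+s\cos\theta_i\to+\infty$ as $s\to\pm\infty$, and $s\mapsto\psi(s)\sin\theta_i+s\cos\theta_i$ has a unique local minimum. Let $\Gamma=\{(s,\psi(s)):s\in\mathbb{R}\}$ be the graph of $\psi$. Then $(\Gamma,\ell_{\theta_1}\cup\ell_{\theta_2})$ is a Heisenberg Uniqueness Pair.
   Context: For a finite complex Borel measure $\mu$ on $\mathbb{R}^2$, $\widehat{\mu}(x,y)=\int_{\mathbb{R}^2}e^{-i(xs+yt)}\,d\mu(s,t)$. For an angle $\theta$, $\ell_\theta=\{t(\cos\theta,\sin\theta):t\in\mathbb{R}\}$. $\mathcal{AC}(\Gamma)$ is the set of finite complex measures supported on $\Gamma$ and absolutely continuous with respect to arc length on $\Gamma$. For $\Lambda\subset\mathbb{R}^2$, $(\Gamma,\Lambda)$ is a Heisenberg Uniqueness Pair if every $\mu\in\mathcal{AC}(\Gamma)$ with $\widehat{\mu}=0$ on $\Lambda$ satisfies $\mu=0$. *)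

theory Defs
  imports "HOL-Analysis.Analysis"
begin

text \<open>Piecewise smooth function: continuous, and there is a locally finite set S of
break points such that off S the function is infinitely differentiable and every
derivative has finite one-sided limits at each break point (so each piece extends
smoothly up to its end points).\<close>
definition piecewise_smooth :: "(real \<Rightarrow> real) \<Rightarrow> bool" where
  "piecewise_smooth \<psi> \<longleftrightarrow> continuous_on UNIV \<psi> \<and>
     (\<exists>S. (\<forall>a b. finite (S \<inter> {a..b})) \<and>
          (\<forall>n. \<forall>x\<in>-S. ((deriv ^^ n) \<psi>) differentiable (at x)) \<and>
          (\<forall>n. \<forall>a\<in>S. \<exists>l r. (((deriv ^^ n) \<psi>) \<longlongrightarrow> l) (at_left a) \<and>
                              (((deriv ^^ n) \<psi>) \<longlongrightarrow> r) (at_right a)))"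

definition is_local_min :: "(real \<Rightarrow> real) \<Rightarrow> real \<Rightarrow> bool" where
  "is_local_min \<phi> s \<longleftrightarrow> (\<exists>e>0. \<forall>t. \<bar>t - s\<bar> < e \<longrightarrow> \<phi> s \<le> \<phi> t)"

definition line :: "real \<Rightarrow> (real \<times> real) set" where
  "line \<theta> = {(t * cos \<theta>, t * sin \<theta>) | t. True}"

definition arclen :: "(real \<Rightarrow> real) \<Rightarrow> (real \<times> real) measure" where
  "arclen \<psi> = distr (density lborel (\<lambda>s. ennreal (sqrt (1 + (deriv \<psi> s)\<^sup>2))))
                      borel (\<lambda>s. (s, \<psi> s))"

definition fourier_dens :: "(real \<times> real) measure \<Rightarrow> (real \<times> real \<Rightarrow> complex) \<Rightarrow> real \<times> real \<Rightarrow> complex" where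
  "fourier_dens M f = (\<lambda>(x, y). LINT p|M. exp (- \<i> * complex_of_real (x * fst p + y * snd p)) * f p)"

text \<open>Heisenberg uniqueness pair for the graph Gamma of psi: the elements of AC(Gamma)
are exactly the measures f d(arclen) with f integrable (Radon-Nikodym); such a measure
vanishes iff f = 0 almost everywhere w.r.t. arc length.\<close>
definition HUP_graph :: "(real \<Rightarrow> real) \<Rightarrow> (real \<times> real) set \<Rightarrow> bool" where
  "HUP_graph \<psi> \<Lambda> \<longleftrightarrow>
     (\<forall>f :: real \<times> real \<Rightarrow> complex. integrable (arclen \<psi>) f \<longrightarrow>
        (\<forall>\<xi>\<in>\<Lambda>. fourier_dens (arclen \<psi>) f \<xi> = 0) \<longrightarrow>
        (AE p in arclen \<psi>. f p = 0))"

end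

theory Submission
  imports Defs "HOL-Probability.Levy"
begin

text \<open>
  On the line \<open>\<ell>\<^sub>\<theta>\<close> the Fourier transform of \<open>f d\<sigma>\<close> is the characteristic function of the
  push-forward, under the projection \<open>\<phi>\<^sub>\<theta> s = \<psi> s sin \<theta> + s cos \<theta>\<close>, of the signed measure
  with density \<open>f(s, \<psi> s)\<close> against arc length on the parameter line. By Levy's uniqueness
  theorem, applied to the positive and negative parts, its vanishing means that every sublevel
  set \<open>{\<phi>\<^sub>\<theta> \<le> c}\<close> carries zero mass. As \<open>\<phi>\<^sub>\<theta>\<close> is coercive with a unique local minimum, these
  sublevel sets are the intervals \<open>[x, y]\<close> with \<open>\<phi>\<^sub>\<theta> x = \<phi>\<^sub>\<theta> y\<close>, so the continuous cumulative
  integral \<open>G x\<close> of \<open>f\<close> over \<open>{..x}\<close> is constant on the level sets of both projections. The least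
  and greatest points of a nonzero level set of \<open>G\<close> then lie on a common level of both
  projections, and two distinct directions separate the points of the graph; so such a level
  set is a single point, which a suitable choice of level rules out. Hence \<open>G = 0\<close> and \<open>f = 0\<close>
  almost everywhere.
\<close>

section \<open>Valleys\<close>

definition valley :: "(real \<Rightarrow> real) \<Rightarrow> real \<Rightarrow> bool" where
  "valley \<phi> m \<longleftrightarrow> continuous_on UNIV \<phi> \<and> filterlim \<phi> at_top at_infinity \<and>
     strict_antimono_on {..m} \<phi> \<and> strict_mono_on {m..} \<phi>"

lemma is_local_min_reflect: "is_local_min (\<lambda>s. \<phi> (- s)) q \<longleftrightarrow> is_local_min \<phi> (- q)"
proof -
  have "(\<forall>t. \<bar>t - q\<bar> < e \<longrightarrow> \<phi> (- q) \<le> \<phi> (- t)) \<longleftrightarrow> (\<forall>t. \<bar>- t - q\<bar> < e \<longrightarrow> \<phi> (- q) \<le> \<phi> t)" for e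
    by (metis minus_minus)
  then show ?thesis by (simp add: is_local_min_def abs_minus_commute add.commute)
qed

lemma less_if_no_local_min_right:
  fixes \<phi> :: "real \<Rightarrow> real"
  assumes cont: "continuous_on UNIV \<phi>" and lim: "filterlim \<phi> at_top at_top"
    and no_min: "\<And>q. q > x \<Longrightarrow> \<not> is_local_min \<phi> q" and "x < y"
  shows "\<phi> x < \<phi> y"
proof -
  have not_least: False if "q > x" and least: "\<And>s. s \<ge> x \<Longrightarrow> \<phi> q \<le> \<phi> s" for q
  proof -
    have "is_local_min \<phi> q"
      unfolding is_local_min_def using \<open>q > x\<close> by (intro exI[of _ "q - x"]) (auto intro: least)
    then show False using no_min \<open>q > x\<close> by blast
  qed
  obtain X where X: "\<And>s. s \<ge> X \<Longrightarrow> \<phi> x < \<phi> s"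
    using lim by (auto simp: filterlim_at_top_dense eventually_at_top_linorder)
  obtain p where p: "p \<in> {x..max x X}" "\<And>s. s \<in> {x..max x X} \<Longrightarrow> \<phi> p \<le> \<phi> s"
    using continuous_attains_inf[of "{x..max x X}" \<phi>] continuous_on_subset[OF cont] by auto
  have p_least: "\<phi> p \<le> \<phi> s" if "s \<ge> x" for s
    using p X[of s] p(2)[of x] that by (cases "s \<le> max x X") force+
  then have "p = x" using not_least[of p] p(1) by force
  show ?thesis
    using not_least[of y] p_least \<open>x < y\<close> unfolding \<open>p = x\<close> by force
qed

lemma strict_mono_on_if_no_local_min_right:
  fixes \<phi> :: "real \<Rightarrow> real"
  assumes "continuous_on UNIV \<phi>" and "filterlim \<phi> at_top at_top"
    and "\<And>q. q > m \<Longrightarrow> \<not> is_local_min \<phi> q"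
  shows "strict_mono_on {m..} \<phi>"
  using less_if_no_local_min_right[OF assms(1,2)] assms(3) by (intro strict_mono_onI) force

lemma valley_if_unique_local_min:
  fixes \<phi> :: "real \<Rightarrow> real"
  assumes cont: "continuous_on UNIV \<phi>"
    and lim_top: "filterlim \<phi> at_top at_top" and lim_bot: "filterlim \<phi> at_top at_bot"
    and unique: "\<And>q. is_local_min \<phi> q \<Longrightarrow> q = m"
  shows "valley \<phi> m"
proof -
  have "continuous_on UNIV (\<lambda>s. \<phi> (- s))"
    by (intro continuous_on_compose2[OF cont] continuous_intros) auto
  moreover have "filterlim (\<lambda>s. \<phi> (- s)) at_top at_top"
    using lim_bot by (simp add: filterlim_at_bot_mirror)
  moreover have "\<not> is_local_min (\<lambda>s. \<phi> (- s)) q" if "q > - m" for q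
    using unique[of "- q"] that by (auto simp: is_local_min_reflect)
  ultimately have reflected: "strict_mono_on {- m..} (\<lambda>s. \<phi> (- s))"
    by (rule strict_mono_on_if_no_local_min_right)
  have "strict_antimono_on {..m} \<phi>"
  proof (rule monotone_onI)
    fix x y assume "x \<in> {..m}" "y \<in> {..m}" "x < y"
    then show "\<phi> y < \<phi> x" using strict_mono_onD[OF reflected, of "- y" "- x"] by simp
  qed
  moreover have "strict_mono_on {m..} \<phi>"
    using unique by (intro strict_mono_on_if_no_local_min_right[OF cont lim_top]) force
  moreover have "filterlim \<phi> at_top at_infinity"
    using lim_top lim_bot by (simp add: at_infinity_eq_at_top_bot filterlim_sup)
  ultimately show ?thesis using cont by (simp add: valley_def)
qed

lemma valley_le_iff:
  assumes "valley \<phi> m"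
  shows valley_le_iff_left: "a \<le> m \<Longrightarrow> b \<le> m \<Longrightarrow> \<phi> a \<le> \<phi> b \<longleftrightarrow> b \<le> a"
    and valley_le_iff_right: "m \<le> a \<Longrightarrow> m \<le> b \<Longrightarrow> \<phi> a \<le> \<phi> b \<longleftrightarrow> a \<le> b"
proof -
  have anti: "strict_antimono_on {..m} \<phi>" and mono: "strict_mono_on {m..} \<phi>"
    using assms by (auto simp: valley_def)
  show "a \<le> m \<Longrightarrow> b \<le> m \<Longrightarrow> \<phi> a \<le> \<phi> b \<longleftrightarrow> b \<le> a"
    using monotone_onD[OF anti, of a b] monotone_onD[OF anti, of b a]
    by (cases a b rule: linorder_cases) auto
  show "m \<le> a \<Longrightarrow> m \<le> b \<Longrightarrow> \<phi> a \<le> \<phi> b \<longleftrightarrow> a \<le> b"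
    using monotone_onD[OF mono, of a b] monotone_onD[OF mono, of b a]
    by (cases a b rule: linorder_cases) auto
qed

lemma valley_opposite_level:
  assumes "valley \<phi> m"
  obtains y where "\<phi> y = \<phi> x" and "x \<le> m \<Longrightarrow> m \<le> y" and "m \<le> x \<Longrightarrow> y \<le> m"
proof -
  have cont: "continuous_on A \<phi>" for A
    using assms continuous_on_subset by (auto simp: valley_def)
  have "filterlim \<phi> at_top at_infinity" using assms by (simp add: valley_def)
  then have lim: "filterlim \<phi> at_top at_top" "filterlim \<phi> at_top at_bot"
    using filterlim_mono[OF _ order_refl] at_top_le_at_infinity at_bot_le_at_infinity by blast+
  consider "x = m" | "m < x" | "x < m" by linarith
  then show ?thesis
  proof cases
    case 1
    then show ?thesis using that by blast
  next
    case 2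
    obtain X where "\<And>s. s \<le> X \<Longrightarrow> \<phi> x \<le> \<phi> s"
      using lim(2) by (auto simp: filterlim_at_top eventually_at_bot_linorder)
    moreover have "\<phi> m \<le> \<phi> x" using valley_le_iff_right[OF assms] 2 by simp
    ultimately obtain y where "y \<le> m" "\<phi> y = \<phi> x"
      using IVT2'[of \<phi> m "\<phi> x" "min X m"] cont by force
    then show ?thesis using that 2 by simp
  next
    case 3
    obtain X where "\<And>s. s \<ge> X \<Longrightarrow> \<phi> x \<le> \<phi> s"
      using lim(1) by (auto simp: filterlim_at_top eventually_at_top_linorder)
    moreover have "\<phi> m \<le> \<phi> x" using valley_le_iff_left[OF assms] 3 by simp
    ultimately obtain y where "m \<le> y" "\<phi> y = \<phi> x"
      using IVT'[of \<phi> m "\<phi> x" "max X m"] cont by force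
    then show ?thesis using that 3 by simp
  qed
qed

lemma valley_sublevel_eq:
  assumes "valley \<phi> m" and "x \<le> m" "m \<le> y" "\<phi> x = \<phi> y"
  shows "{s. \<phi> s \<le> \<phi> x} = {x..y}"
proof -
  have "\<phi> s \<le> \<phi> x \<longleftrightarrow> x \<le> s \<and> s \<le> y" for s
  proof (cases "s \<le> m")
    case True
    then show ?thesis using valley_le_iff_left[OF assms(1) True assms(2)] assms(3) by linarith
  next
    case False
    then show ?thesis using valley_le_iff_right[OF assms(1), of s y] assms(2-4) by auto
  qed
  then show ?thesis by (intro set_eqI) (simp only: mem_Collect_eq atLeastAtMost_iff)
qed

lemma valley_extremes_same_level:
  assumes "valley \<phi> m" and level_closed: "\<And>x y. x \<in> K \<Longrightarrow> \<phi> y = \<phi> x \<Longrightarrow> y \<in> K"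
    and "a \<in> K" "b \<in> K" "K \<subseteq> {a..b}"
  shows "\<phi> a = \<phi> b" and "a = b \<Longrightarrow> a = m"
proof -
  obtain a' where a': "\<phi> a' = \<phi> a" "a \<le> m \<Longrightarrow> m \<le> a'" "m \<le> a \<Longrightarrow> a' \<le> m"
    using valley_opposite_level[OF assms(1)] by metis
  obtain b' where b': "\<phi> b' = \<phi> b" "b \<le> m \<Longrightarrow> m \<le> b'" "m \<le> b \<Longrightarrow> b' \<le> m"
    using valley_opposite_level[OF assms(1)] by metis
  have a'_in: "a \<le> a'" "a' \<le> b" and b'_in: "a \<le> b'" "b' \<le> b"
    using level_closed[of a a'] level_closed[of b b'] a' b' assms(3-5) by auto
  consider "m \<le> a" | "b \<le> m" | "a < m" "m < b" by linarith
  then have "\<phi> a = \<phi> b \<and> (a = b \<longrightarrow> a = m)"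
  proof cases
    case 1
    then have "a' = m" "b' = m" using a' a'_in b' b'_in by auto
    then show ?thesis using 1 a' b' a'_in by auto
  next
    case 2
    then have "a' = m" "b' = m" using a' a'_in b' b'_in by auto
    then show ?thesis using 2 a' b' b'_in by auto
  next
    case 3
    have "\<phi> a' \<le> \<phi> b" using valley_le_iff_right[OF assms(1), of a' b] 3 a' a'_in by auto
    moreover have "\<phi> b' \<le> \<phi> a" using valley_le_iff_left[OF assms(1), of b' a] 3 b' b'_in by auto
    ultimately show ?thesis using 3 a'(1) b'(1) by auto
  qed
  then show "\<phi> a = \<phi> b" "a = b \<Longrightarrow> a = m" by auto
qed

section \<open>A level-set argument\<close>

lemma compact_level_set_if_tendsto_0:
  fixes G :: "'a::{heine_borel, real_normed_vector} \<Rightarrow> 'b::real_normed_vector"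
  assumes "continuous_on UNIV G" "(G \<longlongrightarrow> 0) at_infinity" "w \<noteq> 0"
  shows "compact {s. G s = w}"
proof -
  obtain r where "\<And>s. norm s \<ge> r \<Longrightarrow> norm (G s) < norm w"
    using tendstoD[OF assms(2), of "norm w"] assms(3) by (auto simp: eventually_at_infinity)
  then have "{s. G s = w} \<subseteq> cball 0 r" by force
  moreover have "closed {s. G s = w}"
    using continuous_closed_preimage_constant[OF assms(1) closed_UNIV] by simp
  ultimately show ?thesis by (meson bounded_cball bounded_subset compact_eq_bounded_closed)
qed

text \<open>The extreme points of a level set \<open>K\<close> of \<open>G\<close> lie on a common level of \<open>\<phi>1\<close> and of
  \<open>\<phi>2\<close>, hence coincide; choosing the level different from \<open>G m1\<close> excludes \<open>K = {m1}\<close>.\<close>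

lemma zero_if_constant_on_valley_levels:
  fixes G :: "real \<Rightarrow> real"
  assumes valley1: "valley \<phi>1 m1" and valley2: "valley \<phi>2 m2"
    and separate: "\<And>a b. \<phi>1 a = \<phi>1 b \<Longrightarrow> \<phi>2 a = \<phi>2 b \<Longrightarrow> a = b"
    and cont: "continuous_on UNIV G" and lim: "(G \<longlongrightarrow> 0) at_infinity"
    and const1: "\<And>x y. \<phi>1 x = \<phi>1 y \<Longrightarrow> G x = G y"
    and const2: "\<And>x y. \<phi>2 x = \<phi>2 y \<Longrightarrow> G x = G y"
  shows "G x = 0"
proof (rule ccontr)
  assume "G x \<noteq> 0"
  have attained: "c \<in> range G" if c: "0 < c / G x" "c / G x < 1" for c
  proof -
    have "\<bar>c\<bar> > 0" using c by auto
    then obtain r where r: "\<And>s. norm s \<ge> r \<Longrightarrow> \<bar>G s\<bar> < \<bar>c\<bar>"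
      using tendstoD[OF lim] by (force simp: eventually_at_infinity)
    have "\<bar>G \<bar>r\<bar>\<bar> < \<bar>c\<bar>" using r[of "\<bar>r\<bar>"] by simp
    moreover have "0 < c \<and> c < G x \<or> G x < c \<and> c < 0"
      using c by (auto simp: zero_less_divide_iff divide_less_eq_1)
    ultimately have "G \<bar>r\<bar> \<le> c \<and> c \<le> G x \<or> G x \<le> c \<and> c \<le> G \<bar>r\<bar>" by linarith
    then show ?thesis
      using connectedD_interval[OF connected_continuous_image[OF cont connected_UNIV]] by blast
  qed
  obtain w where "w \<in> range G" "w \<noteq> 0" "w \<noteq> G m1"
  proof (cases "G m1 = G x / 2")
    case True
    then show ?thesis using that[of "G x / 3"] attained[of "G x / 3"] \<open>G x \<noteq> 0\<close> by auto
  next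
    case False
    then show ?thesis using that[of "G x / 2"] attained[of "G x / 2"] \<open>G x \<noteq> 0\<close> by auto
  qed
  define K where "K = {s. G s = w}"
  have "compact K" "K \<noteq> {}"
    using compact_level_set_if_tendsto_0[OF cont lim \<open>w \<noteq> 0\<close>] \<open>w \<in> range G\<close> by (auto simp: K_def)
  then obtain a b where ab: "a \<in> K" "b \<in> K" "K \<subseteq> {a..b}"
    using compact_attains_inf[of K] compact_attains_sup[of K] by (meson atLeastAtMost_iff subsetI)
  have "y \<in> K" if "x \<in> K" "\<phi>1 y = \<phi>1 x" for x y
    using const1[OF that(2)] that(1) by (simp add: K_def)
  then have "\<phi>1 a = \<phi>1 b" "a = b \<Longrightarrow> a = m1"
    using valley_extremes_same_level[OF valley1 _ ab] by blast+
  have "y \<in> K" if "x \<in> K" "\<phi>2 y = \<phi>2 x" for x y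
    using const2[OF that(2)] that(1) by (simp add: K_def)
  then have "\<phi>2 a = \<phi>2 b"
    using valley_extremes_same_level[OF valley2 _ ab] by blast
  then have "m1 \<in> K"
    using separate \<open>\<phi>1 a = \<phi>1 b\<close> \<open>a = b \<Longrightarrow> a = m1\<close> ab(1) by blast
  then show False using \<open>w \<noteq> G m1\<close> by (simp add: K_def)
qed

section \<open>Sublevel integrals from Fourier data\<close>

lemma integral_distr_density:
  fixes g :: "real \<Rightarrow> 'b::{banach, second_countable_topology}"
  assumes "\<phi> \<in> borel_measurable N" "v \<in> borel_measurable N" "\<And>s. 0 \<le> v s"
    and "g \<in> borel_measurable borel"
  shows "(\<integral>x. g x \<partial>distr (density N v) borel \<phi>) = (\<integral>s. v s *\<^sub>R g (\<phi> s) \<partial>N)"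
proof -
  have "(\<integral>x. g x \<partial>distr (density N v) borel \<phi>) = (\<integral>s. g (\<phi> s) \<partial>density N v)"
    using assms by (intro integral_distr) auto
  also have "\<dots> = (\<integral>s. v s *\<^sub>R g (\<phi> s) \<partial>N)"
    using assms by (intro integral_density) auto
  finally show ?thesis .
qed

lemma real_distribution_distr_density:
  assumes "\<phi> \<in> borel_measurable N" "integrable N v" "\<And>s. 0 \<le> v s" "(LINT s|N. v s) = 1"
  shows "real_distribution (distr (density N v) borel \<phi>)"
proof -
  have "emeasure (density N v) (space (density N v)) = (\<integral>\<^sup>+ s. ennreal (v s) \<partial>N)"
    using assms(2) by (auto simp: emeasure_density intro!: nn_integral_cong)
  also have "\<dots> = 1"
    using nn_integral_eq_integral[OF assms(2)] assms(3,4) by simp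
  finally have "prob_space (density N v)" by (rule prob_spaceI)
  then have "prob_space (distr (density N v) borel \<phi>)"
    using assms(1) by (intro prob_space.prob_space_distr) auto
  then show ?thesis by (simp add: real_distribution_def real_distribution_axioms_def)
qed

lemma set_integral_sublevel_eq_if_char_eq:
  assumes \<phi>: "\<phi> \<in> borel_measurable N"
    and v: "integrable N v" "\<And>s. 0 \<le> v s" and w: "integrable N w" "\<And>s. 0 \<le> w s"
    and char_eq: "\<And>t. (CLINT s|N. v s *\<^sub>R iexp (t * \<phi> s)) = (CLINT s|N. w s *\<^sub>R iexp (t * \<phi> s))"
  shows "(LINT s:{s. \<phi> s \<le> c}|N. v s) = (LINT s:{s. \<phi> s \<le> c}|N. w s)"
proof -
  define m where "m = (LINT s|N. v s)"
  have m_w: "(LINT s|N. w s) = m"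
    using char_eq[of 0] by (simp add: m_def scaleR_conv_of_real)
  have sublevel: "(LINT s:{s. \<phi> s \<le> c}|N. u s / m) =
      (LINT x|distr (density N (\<lambda>s. u s / m)) borel \<phi>. indicator {..c} x)"
    if "integrable N u" "\<And>s. 0 \<le> u s" "m > 0" for u
    using that \<phi> by (subst integral_distr_density)
      (auto simp: set_lebesgue_integral_def indicator_def mult.commute)
  have char: "char (distr (density N (\<lambda>s. u s / m)) borel \<phi>) t =
      (CLINT s|N. u s *\<^sub>R iexp (t * \<phi> s)) / m"
    if "integrable N u" "\<And>s. 0 \<le> u s" "m > 0" for u t
    using that \<phi> unfolding char_def
    by (subst integral_distr_density) (auto simp: scaleR_conv_of_real divide_inverse mult_ac)
  have "m \<ge> 0" unfolding m_def using v(2) by (intro integral_nonneg_AE) simp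
  then consider "m = 0" | "m > 0" by linarith
  then show ?thesis
  proof cases
    case 1
    have "AE s in N. v s = 0" "AE s in N. w s = 0"
      using integral_nonneg_eq_0_iff_AE[OF v(1)] integral_nonneg_eq_0_iff_AE[OF w(1)]
        v(2) w(2) 1 m_w
      by (auto simp: m_def)
    then have "AE s in N. indicator {s. \<phi> s \<le> c} s * v s = 0"
      "AE s in N. indicator {s. \<phi> s \<le> c} s * w s = 0" by auto
    then show ?thesis
      by (simp add: set_lebesgue_integral_def integral_eq_zero_AE)
  next
    case 2
    have "char (distr (density N (\<lambda>s. v s / m)) borel \<phi>) =
        char (distr (density N (\<lambda>s. w s / m)) borel \<phi>)"
      by (rule ext) (simp only: char[OF v 2] char[OF w 2] char_eq)
    then have "distr (density N (\<lambda>s. v s / m)) borel \<phi> = distr (density N (\<lambda>s. w s / m)) borel \<phi>"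
      using v w 2 m_w \<phi>
      by (intro Levy_uniqueness real_distribution_distr_density) (auto simp: m_def)
    then have "(LINT s:{s. \<phi> s \<le> c}|N. v s / m) = (LINT s:{s. \<phi> s \<le> c}|N. w s / m)"
      unfolding sublevel[OF v 2] sublevel[OF w 2] by (rule arg_cong)
    then show ?thesis using 2 by simp
  qed
qed

lemma integrable_scaleR_iexp:
  assumes "integrable N v" "\<phi> \<in> borel_measurable N"
  shows "integrable N (\<lambda>s. v s *\<^sub>R iexp (t * \<phi> s))"
  using assms by (intro Bochner_Integration.integrable_bound[OF assms(1)]) (auto simp: norm_mult)

lemma set_integrable_sublevel:
  fixes \<phi> :: "'a \<Rightarrow> real" and u :: "'a \<Rightarrow> 'b::{banach, second_countable_topology}"
  assumes "\<phi> \<in> borel_measurable N" "integrable N u"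
  shows "set_integrable N {s. \<phi> s \<le> c} u"
  unfolding set_integrable_def
proof (rule Bochner_Integration.integrable_bound[OF assms(2)])
  have "(\<lambda>s. indicator {..c} (\<phi> s) *\<^sub>R u s) \<in> borel_measurable N"
    using assms
    by (intro borel_measurable_scaleR measurable_compose[OF assms(1)] borel_measurable_indicator)
      auto
  then show "(\<lambda>s. indicator {s. \<phi> s \<le> c} s *\<^sub>R u s) \<in> borel_measurable N"
    by (simp add: indicator_def)
qed (auto simp: indicator_def)

lemma set_integral_sublevel_eq_0_if_fourier_eq_0:
  fixes u :: "'a \<Rightarrow> real"
  assumes \<phi>: "\<phi> \<in> borel_measurable N" and u: "integrable N u"
    and fourier: "\<And>t. (CLINT s|N. u s *\<^sub>R iexp (t * \<phi> s)) = 0"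
  shows "(LINT s:{s. \<phi> s \<le> c}|N. u s) = 0"
proof -
  define u\<^sub>p u\<^sub>n where "u\<^sub>p s = max (u s) 0" and "u\<^sub>n s = max (- u s) 0" for s
  have parts: "integrable N u\<^sub>p" "\<And>s. 0 \<le> u\<^sub>p s" "integrable N u\<^sub>n" "\<And>s. 0 \<le> u\<^sub>n s"
    unfolding u\<^sub>p_def u\<^sub>n_def using u by auto
  have u_eq: "u s = u\<^sub>p s - u\<^sub>n s" for s by (simp add: u\<^sub>p_def u\<^sub>n_def)
  have "(CLINT s|N. u\<^sub>p s *\<^sub>R iexp (t * \<phi> s)) - (CLINT s|N. u\<^sub>n s *\<^sub>R iexp (t * \<phi> s)) =
        (CLINT s|N. u s *\<^sub>R iexp (t * \<phi> s))" for t
    using integrable_scaleR_iexp[OF parts(1) \<phi>] integrable_scaleR_iexp[OF parts(3) \<phi>]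
    by (simp add: u_eq scaleR_diff_left flip: Bochner_Integration.integral_diff)
  then have "(LINT s:{s. \<phi> s \<le> c}|N. u\<^sub>p s) = (LINT s:{s. \<phi> s \<le> c}|N. u\<^sub>n s)"
    using fourier by (intro set_integral_sublevel_eq_if_char_eq[OF \<phi> parts]) simp
  then show ?thesis
    using set_integrable_sublevel[OF \<phi> parts(1)] set_integrable_sublevel[OF \<phi> parts(3)]
    by (simp add: u_eq set_integral_diff)
qed

lemma integrable_iexp_mult:
  fixes F :: "'a \<Rightarrow> complex"
  assumes "integrable N F" "\<phi> \<in> borel_measurable N"
  shows "integrable N (\<lambda>s. iexp (t * \<phi> s) * F s)"
proof (rule Bochner_Integration.integrable_bound[OF assms(1)])
  have [measurable]: "F \<in> borel_measurable N" "\<phi> \<in> borel_measurable N"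
    using assms by auto
  show "(\<lambda>s. iexp (t * \<phi> s) * F s) \<in> borel_measurable N" by measurable
qed (simp add: norm_mult)

lemma fourier_Re_Im_eq_0:
  fixes F :: "'a \<Rightarrow> complex"
  assumes F: "integrable N F" and \<phi>: "\<phi> \<in> borel_measurable N"
    and fourier: "\<And>t. (CLINT s|N. iexp (t * \<phi> s) * F s) = 0"
  shows "(CLINT s|N. Re (F s) *\<^sub>R iexp (t * \<phi> s)) = 0"
    and "(CLINT s|N. Im (F s) *\<^sub>R iexp (t * \<phi> s)) = 0"
proof -
  have int: "integrable N (\<lambda>s. iexp (t * \<phi> s) * F s)"
    "integrable N (\<lambda>s. iexp (t * \<phi> s) * cnj (F s))"
    using integrable_iexp_mult[OF F \<phi>] integrable_iexp_mult[OF integrable_cnj[OF F] \<phi>] .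
  have "(CLINT s|N. iexp (t * \<phi> s) * cnj (F s)) = (CLINT s|N. cnj (iexp (- t * \<phi> s) * F s))"
    by (rule Bochner_Integration.integral_cong) (simp_all add: exp_cnj)
  also have "\<dots> = cnj (CLINT s|N. iexp (- t * \<phi> s) * F s)"
    by (rule Bochner_Integration.integral_cnj)
  also have "\<dots> = 0" using fourier[of "- t"] by simp
  finally have conj: "(CLINT s|N. iexp (t * \<phi> s) * cnj (F s)) = 0" .
  have "Re z *\<^sub>R w = (w * z + w * cnj z) / 2" "Im z *\<^sub>R w = (w * z - w * cnj z) / (2 * \<i>)" for z w
    by (simp_all add: complex_eq_iff)
  then have "(CLINT s|N. Re (F s) *\<^sub>R iexp (t * \<phi> s)) =
        ((CLINT s|N. iexp (t * \<phi> s) * F s) + (CLINT s|N. iexp (t * \<phi> s) * cnj (F s))) / 2"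
    and "(CLINT s|N. Im (F s) *\<^sub>R iexp (t * \<phi> s)) =
        ((CLINT s|N. iexp (t * \<phi> s) * F s) - (CLINT s|N. iexp (t * \<phi> s) * cnj (F s))) / (2 * \<i>)"
    by (simp_all only: integral_divide_zero Bochner_Integration.integral_add[OF int]
        Bochner_Integration.integral_diff[OF int])
  then show "(CLINT s|N. Re (F s) *\<^sub>R iexp (t * \<phi> s)) = 0"
    and "(CLINT s|N. Im (F s) *\<^sub>R iexp (t * \<phi> s)) = 0"
    using fourier conj by simp_all
qed

section \<open>Cumulative integrals\<close>

definition cumulative_integral :: "real measure \<Rightarrow> (real \<Rightarrow> real) \<Rightarrow> real \<Rightarrow> real" where
  "cumulative_integral N u x = (LINT s:{..x}|N. u s)"

lemma isCont_cumulative_integral: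
  assumes sets: "sets N = sets borel" and u: "integrable N u"
    and no_atoms: "\<And>x. emeasure N {x} = 0"
  shows "isCont (cumulative_integral N u) x"
proof (rule continuous_at_sequentiallyI)
  fix X :: "nat \<Rightarrow> real" assume X: "X \<longlonglongrightarrow> x"
  have "AE s in N. s \<noteq> x"
    using no_atoms sets by (intro AE_I[of _ _ "{x}"]) auto
  then have "AE s in N. (\<lambda>n. indicator {..X n} s * u s) \<longlonglongrightarrow> indicator {..x} s * u s"
  proof eventually_elim
    case (elim s)
    then have "eventually (\<lambda>n. s \<le> X n \<longleftrightarrow> s \<le> x) sequentially"
      using order_tendstoD[OF X, of s] by (cases "s < x") (auto elim: eventually_mono)
    then show ?case
      by (intro tendsto_eventually) (auto elim!: eventually_mono simp: indicator_def)
  qed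
  then have "(\<lambda>n. LINT s|N. indicator {..X n} s * u s) \<longlonglongrightarrow> (LINT s|N. indicator {..x} s * u s)"
    using u sets by (intro integral_dominated_convergence[where w="\<lambda>s. norm (u s)"])
      (auto simp: indicator_def measurable_cong_sets[OF sets refl])
  then show "(\<lambda>n. cumulative_integral N u (X n)) \<longlonglongrightarrow> cumulative_integral N u x"
    by (simp add: cumulative_integral_def set_lebesgue_integral_def)
qed

lemma tendsto_cumulative_integral_at_top:
  assumes "sets N = sets borel" "integrable N u"
  shows "(cumulative_integral N u \<longlongrightarrow> (LINT s|N. u s)) at_top"
  using tendsto_integral_at_top[OF assms]
  unfolding cumulative_integral_def[abs_def] set_lebesgue_integral_def by simp

lemma tendsto_cumulative_integral_at_bot:
  assumes sets: "sets N = sets borel" and u: "integrable N u"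
  shows "(cumulative_integral N u \<longlongrightarrow> 0) at_bot"
proof -
  have "((\<lambda>t. LINT s|N. indicator {..- t} s * u s) \<longlongrightarrow> (LINT s|N. 0)) at_top"
  proof (rule integral_dominated_convergence_at_top[where w="\<lambda>s. norm (u s)"])
    have "((\<lambda>t. indicator {..- t} s * u s) \<longlongrightarrow> 0) at_top" for s
      by (intro tendsto_eventually eventually_mono[OF eventually_gt_at_top[of "- s"]])
        (auto simp: indicator_def)
    then show "AE s in N. ((\<lambda>t. indicator {..- t} s * u s) \<longlongrightarrow> 0) at_top" by simp
  qed (use u sets in \<open>auto simp: indicator_def measurable_cong_sets[OF sets refl]\<close>)
  then show ?thesis
    by (simp add: filterlim_at_bot_mirror cumulative_integral_def set_lebesgue_integral_def)
qed

lemma set_integrable_borel: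
  fixes u :: "'a::topological_space \<Rightarrow> 'b::{banach, second_countable_topology}"
  assumes "sets N = sets borel" "integrable N u" "A \<in> sets borel"
  shows "set_integrable N A u"
  using assms integrable_mult_indicator[of A N u] by (simp add: set_integrable_def)

lemma cumulative_integral_diff:
  assumes sets: "sets N = sets borel" and u: "integrable N u"
    and no_atoms: "\<And>x. emeasure N {x} = 0" and "a \<le> b"
  shows "cumulative_integral N u b - cumulative_integral N u a = (LINT s:{a..b}|N. u s)"
proof -
  have "(LINT s:{..a} \<union> {a..b}|N. u s) = (LINT s:{..a}|N. u s) + (LINT s:{a..b}|N. u s)"
  proof (rule set_integral_Un_AE)
    show "AE s in N. \<not> (s \<in> {..a} \<and> s \<in> {a..b})"
      using no_atoms sets by (intro AE_I[of _ _ "{a}"]) auto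
  qed (use sets set_integrable_borel[OF sets u] in auto)
  moreover have "{..a} \<union> {a..b} = {..b}" using \<open>a \<le> b\<close> by auto
  ultimately have "(LINT s:{..b}|N. u s) = (LINT s:{..a}|N. u s) + (LINT s:{a..b}|N. u s)" by simp
  then show ?thesis by (simp add: cumulative_integral_def)
qed

lemma AE_eq_0_if_set_integrals_eq_0:
  fixes u :: "'a \<Rightarrow> real"
  assumes u: "integrable N u" and zero: "\<And>A. A \<in> sets N \<Longrightarrow> (LINT s:A|N. u s) = 0"
  shows "AE s in N. u s = 0"
proof -
  have part: "AE s in N. indicator A s * f s = 0"
    if "A \<in> sets N" "integrable N f" "\<And>s. s \<in> A \<Longrightarrow> 0 \<le> f s" "(LINT s:A|N. f s) = 0"
    for f :: "'a \<Rightarrow> real" and A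
    using that integrable_mult_indicator[of A N f]
    by (subst integral_nonneg_eq_0_iff_AE[symmetric])
      (auto simp: set_lebesgue_integral_def indicator_def)
  have [measurable]: "u \<in> borel_measurable N" using u by simp
  have "AE s in N. indicator {s \<in> space N. 0 < u s} s * u s = 0"
    using u zero by (intro part) auto
  moreover have "AE s in N. indicator {s \<in> space N. u s < 0} s * - u s = 0"
    using u zero[of "{s \<in> space N. u s < 0}"] by (intro part) (auto simp: set_lebesgue_integral_def)
  moreover have "AE s in N. s \<in> space N" by (rule AE_space)
  ultimately show ?thesis
    by eventually_elim (auto simp: indicator_def split: if_splits)
qed

lemma AE_eq_0_if_cumulative_integral_eq_0:
  assumes sets: "sets N = sets borel" and u: "integrable N u"
    and zero: "\<And>x. cumulative_integral N u x = 0"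
  shows "AE s in N. u s = 0"
proof (rule AE_eq_0_if_set_integrals_eq_0[OF u])
  have "cumulative_integral N u = (\<lambda>x. 0)" using zero by (simp add: fun_eq_iff)
  then have "((\<lambda>x::real. 0::real) \<longlongrightarrow> (LINT s|N. u s)) at_top"
    using tendsto_cumulative_integral_at_top[OF sets u] by simp
  then have total: "(LINT s|N. u s) = 0"
    using tendsto_unique[OF trivial_limit_at_top_linorder _ tendsto_const] by metis
  have generator: "sets N = sigma_sets UNIV (range atMost)"
    unfolding sets borel_eq_atMost by (rule sets_measure_of) simp
  have Int_stable: "Int_stable (range (atMost :: real \<Rightarrow> _))"
    by (auto simp: Int_stable_def intro!: exI[of _ "min _ _"])
  fix A assume "A \<in> sets N"
  then have A: "A \<in> sigma_sets UNIV (range atMost)" by (simp only: generator)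
  show "(LINT s:A|N. u s) = 0"
  proof (induct rule: sigma_sets_induct_disjoint[OF Int_stable _ A,
        case_names closed basic empty compl union])
    case (basic A)
    then show ?case using zero by (auto simp: cumulative_integral_def)
  next
    case (compl A)
    then have "(LINT s:(UNIV - A) \<union> A|N. u s) = (LINT s:UNIV - A|N. u s) + (LINT s:A|N. u s)"
      using set_integrable_borel[OF sets u] generator sets
      by (intro set_integral_Un) (auto intro: sigma_sets.Compl)
    then show ?case using compl total by (simp add: set_lebesgue_integral_def)
  next
    case (union A)
    then have "A i \<in> sets N" for i using generator by auto
    then have "(LINT s:(\<Union>i. A i)|N. u s) = (\<Sum>i. LINT s:A i|N. u s)"
      using union set_integrable_borel[OF sets u] sets
      by (intro lebesgue_integral_countable_add) (auto simp: disjoint_family_on_def)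
    then show ?case using union by simp
  qed (auto simp: generator set_lebesgue_integral_def)
qed

lemma cumulative_integral_eq_on_level_sets:
  assumes sets: "sets N = sets borel" and u: "integrable N u"
    and no_atoms: "\<And>x. emeasure N {x} = 0" and valley: "valley \<phi> m"
    and sublevel_zero: "\<And>c. (LINT s:{s. \<phi> s \<le> c}|N. u s) = 0"
  assumes "\<phi> x = \<phi> y"
  shows "cumulative_integral N u x = cumulative_integral N u y"
proof -
  have *: "cumulative_integral N u x = cumulative_integral N u y" if "\<phi> x = \<phi> y" "x < y" for x y
  proof -
    have "\<not> y \<le> m" "\<not> m \<le> x"
      using that valley_le_iff_left[OF valley, of x y] valley_le_iff_right[OF valley, of y x]
      by auto
    then have "x \<le> m" "m \<le> y" by linarith+
    then have "{s. \<phi> s \<le> \<phi> x} = {x..y}" by (rule valley_sublevel_eq[OF valley _ _ that(1)])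
    then show ?thesis
      using cumulative_integral_diff[OF sets u no_atoms, of x y] sublevel_zero[of "\<phi> x"] that(2)
      by simp
  qed
  show ?thesis
  proof (cases x y rule: linorder_cases)
    case less
    then show ?thesis using *[OF \<open>\<phi> x = \<phi> y\<close>] by blast
  next
    case greater
    then show ?thesis using *[OF \<open>\<phi> x = \<phi> y\<close>[symmetric]] by metis
  qed simp
qed

lemma AE_eq_0_if_fourier_vanishes_on_two_valleys:
  fixes u :: "real \<Rightarrow> real"
  assumes sets: "sets N = sets borel" and u: "integrable N u"
    and no_atoms: "\<And>x. emeasure N {x} = 0"
    and valley1: "valley \<phi>1 m1" and valley2: "valley \<phi>2 m2"
    and separate: "\<And>a b. \<phi>1 a = \<phi>1 b \<Longrightarrow> \<phi>2 a = \<phi>2 b \<Longrightarrow> a = b"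
    and fourier1: "\<And>t. (CLINT s|N. u s *\<^sub>R iexp (t * \<phi>1 s)) = 0"
    and fourier2: "\<And>t. (CLINT s|N. u s *\<^sub>R iexp (t * \<phi>2 s)) = 0"
  shows "AE s in N. u s = 0"
proof (rule AE_eq_0_if_cumulative_integral_eq_0[OF sets u])
  have measurable: "\<phi> \<in> borel_measurable N" if "valley \<phi> m" for \<phi> m
    using that by (auto simp: valley_def measurable_cong_sets[OF sets refl]
        intro: borel_measurable_continuous_onI)
  have cont: "continuous_on UNIV (cumulative_integral N u)"
    using isCont_cumulative_integral[OF sets u no_atoms]
    by (simp add: continuous_at_imp_continuous_on)
  have "(LINT s|N. u s) = 0" using fourier1[of 0] by (simp add: scaleR_conv_of_real)
  then have lim: "(cumulative_integral N u \<longlongrightarrow> 0) at_infinity"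
    using tendsto_cumulative_integral_at_top[OF sets u]
      tendsto_cumulative_integral_at_bot[OF sets u]
    by (simp add: at_infinity_eq_at_top_bot filterlim_sup)
  have const1: "cumulative_integral N u a = cumulative_integral N u b" if "\<phi>1 a = \<phi>1 b" for a b
    using set_integral_sublevel_eq_0_if_fourier_eq_0[OF measurable[OF valley1] u fourier1]
    by (rule cumulative_integral_eq_on_level_sets[OF sets u no_atoms valley1 _ that])
  have const2: "cumulative_integral N u a = cumulative_integral N u b" if "\<phi>2 a = \<phi>2 b" for a b
    using set_integral_sublevel_eq_0_if_fourier_eq_0[OF measurable[OF valley2] u fourier2]
    by (rule cumulative_integral_eq_on_level_sets[OF sets u no_atoms valley2 _ that])
  show "cumulative_integral N u x = 0" for x
    using valley1 valley2 separate cont lim const1 const2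
    by (rule zero_if_constant_on_valley_levels)
qed

section \<open>Graphs and arc length\<close>

definition graph_proj :: "(real \<Rightarrow> real) \<Rightarrow> real \<Rightarrow> real \<Rightarrow> real" where
  "graph_proj \<psi> \<theta> = (\<lambda>s. \<psi> s * sin \<theta> + s * cos \<theta>)"

lemma graph_proj_eq_two_directions:
  assumes "\<theta>1 \<noteq> \<theta>2" "\<theta>1 \<in> {0<..<pi}" "\<theta>2 \<in> {0<..<pi}"
    and "graph_proj \<psi> \<theta>1 a = graph_proj \<psi> \<theta>1 b" "graph_proj \<psi> \<theta>2 a = graph_proj \<psi> \<theta>2 b"
  shows "a = b"
proof -
  have "(b - a) * sin (\<theta>2 - \<theta>1) =
        sin \<theta>2 * (graph_proj \<psi> \<theta>1 b - graph_proj \<psi> \<theta>1 a)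
        - sin \<theta>1 * (graph_proj \<psi> \<theta>2 b - graph_proj \<psi> \<theta>2 a)"
    by (simp add: graph_proj_def sin_diff algebra_simps)
  also have "\<dots> = 0" using assms(4,5) by simp
  finally have "(b - a) * sin (\<theta>2 - \<theta>1) = 0" .
  moreover have "sin (\<theta>2 - \<theta>1) \<noteq> 0"
    using assms(1-3) sin_eq_0_pi[of "\<theta>2 - \<theta>1"] by auto
  ultimately show ?thesis by simp
qed

lemma continuous_on_graph_proj: "continuous_on UNIV \<psi> \<Longrightarrow> continuous_on UNIV (graph_proj \<psi> \<theta>)"
  unfolding graph_proj_def by (intro continuous_intros)

lemma borel_measurable_deriv_off_countable:
  fixes \<psi> :: "real \<Rightarrow> real"
  assumes "countable S" and diff: "\<And>x. x \<notin> S \<Longrightarrow> \<psi> differentiable (at x)"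
    and cont: "continuous_on UNIV \<psi>"
  shows "deriv \<psi> \<in> borel_measurable borel"
proof -
  define q where "q n x = (\<psi> (x + 1 / Suc n) - \<psi> x) * Suc n" for n x
  have "q n \<in> borel_measurable borel" for n
    unfolding q_def
    by (intro borel_measurable_continuous_onI continuous_intros continuous_on_compose2[OF cont])
      auto
  then have lim_measurable: "(\<lambda>x. lim (\<lambda>n. q n x)) \<in> borel_measurable borel"
    by (rule borel_measurable_lim_metric)
  have "lim (\<lambda>n. q n x) = deriv \<psi> x" if "x \<notin> S" for x
  proof -
    have "((\<lambda>h. (\<psi> (x + h) - \<psi> x) / h) \<longlongrightarrow> deriv \<psi> x) (at 0)"
      using diff[OF that] by (simp add: DERIV_deriv_iff_real_differentiable[symmetric] DERIV_def)
    moreover have "filterlim (\<lambda>n. 1 / real (Suc n)) (at 0) sequentially"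
      using LIMSEQ_inverse_real_of_nat by (simp add: filterlim_at inverse_eq_divide)
    ultimately have "(\<lambda>n. q n x) \<longlonglongrightarrow> deriv \<psi> x"
      using filterlim_compose by (fastforce simp: q_def)
    then show ?thesis by (rule limI)
  qed
  then show ?thesis
    by (intro measurable_discrete_difference[OF lim_measurable \<open>countable S\<close>]) auto
qed

lemma countable_if_finite_Int_atLeastAtMost:
  fixes S :: "real set"
  assumes "\<And>a b. finite (S \<inter> {a..b})"
  shows "countable S"
proof -
  have "x \<in> (\<Union>n::nat. S \<inter> {- real n..real n})" if "x \<in> S" for x
  proof -
    obtain n :: nat where "\<bar>x\<bar> \<le> real n" using real_arch_simple by blast
    then show ?thesis using that by (intro UN_I[of n]) auto
  qed
  then have "S = (\<Union>n::nat. S \<inter> {- real n..real n})" by blast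
  also have "countable \<dots>"
    by (rule countable_UN) (simp_all add: countable_finite[OF assms])
  finally show ?thesis .
qed

lemma borel_measurable_deriv_if_piecewise_smooth:
  assumes "piecewise_smooth \<psi>"
  shows "deriv \<psi> \<in> borel_measurable borel"
proof -
  obtain S where fin: "\<forall>a b. finite (S \<inter> {a..b})"
    and smooth: "\<forall>n. \<forall>x\<in>-S. (deriv ^^ n) \<psi> differentiable (at x)"
    using assms unfolding piecewise_smooth_def by blast
  have diff: "\<psi> differentiable (at x)" if "x \<notin> S" for x
    using smooth that by (metis ComplI funpow_0)
  have "continuous_on UNIV \<psi>" using assms by (simp add: piecewise_smooth_def)
  then show ?thesis
    using countable_if_finite_Int_atLeastAtMost fin diff
    by (metis borel_measurable_deriv_off_countable)
qed

definition arclen_param :: "(real \<Rightarrow> real) \<Rightarrow> real measure" where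
  "arclen_param \<psi> = density lborel (\<lambda>s. ennreal (sqrt (1 + (deriv \<psi> s)\<^sup>2)))"

lemma arclen_eq_distr: "arclen \<psi> = distr (arclen_param \<psi>) borel (\<lambda>s. (s, \<psi> s))"
  by (simp add: arclen_def arclen_param_def)

lemma sets_arclen_param [simp]: "sets (arclen_param \<psi>) = sets borel"
  by (simp add: arclen_param_def)

lemma emeasure_arclen_param_singleton:
  assumes "deriv \<psi> \<in> borel_measurable borel"
  shows "emeasure (arclen_param \<psi>) {x} = 0"
proof -
  have density: "(\<lambda>s. ennreal (sqrt (1 + (deriv \<psi> s)\<^sup>2))) \<in> borel_measurable lborel"
    using assms by simp
  have "AE s in lborel. s \<in> {x} \<longrightarrow> ennreal (sqrt (1 + (deriv \<psi> s)\<^sup>2)) = 0"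
    using AE_lborel_singleton[of x] by eventually_elim auto
  then have "{x} \<in> null_sets (arclen_param \<psi>)"
    unfolding arclen_param_def null_sets_density_iff[OF density] by simp
  then show ?thesis by auto
qed

lemma measurable_graph:
  "continuous_on UNIV \<psi> \<Longrightarrow> (\<lambda>s. (s, \<psi> s)) \<in> measurable (arclen_param \<psi>) borel"
  unfolding measurable_cong_sets[OF sets_arclen_param refl]
  by (intro borel_measurable_continuous_onI continuous_intros)

lemma fourier_dens_arclen_line:
  assumes cont: "continuous_on UNIV \<psi>" and f: "f \<in> borel_measurable borel"
  shows "fourier_dens (arclen \<psi>) f (t * cos \<theta>, t * sin \<theta>) =
    (CLINT s|arclen_param \<psi>. iexp (- t * graph_proj \<psi> \<theta> s) * f (s, \<psi> s))"
proof -
  have "(\<lambda>p. exp (- \<i> * complex_of_real (t * cos \<theta> * fst p + t * sin \<theta> * snd p)) * f p)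
      \<in> borel_measurable borel"
    by (intro borel_measurable_times[OF _ f] borel_measurable_continuous_onI continuous_intros)
  then show ?thesis
    unfolding fourier_dens_def arclen_eq_distr
    by (simp add: integral_distr[OF measurable_graph[OF cont]] graph_proj_def algebra_simps)
qed

lemma AE_arclen_param_eq_0_if_fourier_eq_0:
  fixes F :: "real \<Rightarrow> complex"
  assumes smooth: "piecewise_smooth \<psi>"
    and \<theta>: "\<theta>1 \<noteq> \<theta>2" "\<theta>1 \<in> {0<..<pi}" "\<theta>2 \<in> {0<..<pi}"
    and shape: "\<forall>\<theta>\<in>{\<theta>1, \<theta>2}.
      filterlim (graph_proj \<psi> \<theta>) at_top at_top \<and> filterlim (graph_proj \<psi> \<theta>) at_top at_bot \<and>
      (\<exists>!s. is_local_min (graph_proj \<psi> \<theta>) s)"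
    and F: "integrable (arclen_param \<psi>) F"
    and fourier: "\<And>\<theta> t. \<theta> \<in> {\<theta>1, \<theta>2} \<Longrightarrow>
      (CLINT s|arclen_param \<psi>. iexp (t * graph_proj \<psi> \<theta> s) * F s) = 0"
  shows "AE s in arclen_param \<psi>. F s = 0"
proof -
  have cont: "continuous_on UNIV (graph_proj \<psi> \<theta>)" for \<theta>
    using smooth by (intro continuous_on_graph_proj) (simp add: piecewise_smooth_def)
  have "\<exists>m. valley (graph_proj \<psi> \<theta>) m" if "\<theta> \<in> {\<theta>1, \<theta>2}" for \<theta>
    using shape that by (metis valley_if_unique_local_min[OF cont])
  then obtain m1 m2 where valley1: "valley (graph_proj \<psi> \<theta>1) m1"
    and valley2: "valley (graph_proj \<psi> \<theta>2) m2"
    by blast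
  have no_atoms: "emeasure (arclen_param \<psi>) {x} = 0" for x
    using borel_measurable_deriv_if_piecewise_smooth[OF smooth]
    by (rule emeasure_arclen_param_singleton)
  have separate: "a = b"
    if "graph_proj \<psi> \<theta>1 a = graph_proj \<psi> \<theta>1 b" "graph_proj \<psi> \<theta>2 a = graph_proj \<psi> \<theta>2 b" for a b
    using graph_proj_eq_two_directions[OF \<theta> that] .
  have measurable: "graph_proj \<psi> \<theta> \<in> borel_measurable (arclen_param \<psi>)" for \<theta>
    unfolding measurable_cong_sets[OF sets_arclen_param refl]
    by (rule borel_measurable_continuous_onI[OF cont])
  note fourier_Re_Im = fourier_Re_Im_eq_0[OF F measurable fourier]
  have "AE s in arclen_param \<psi>. Re (F s) = 0" "AE s in arclen_param \<psi>. Im (F s) = 0"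
    using F fourier_Re_Im
    by (auto intro!: AE_eq_0_if_fourier_vanishes_on_two_valleys[OF sets_arclen_param _ no_atoms
        valley1 valley2 separate])
  then show ?thesis by eventually_elim (simp add: complex_eq_iff)
qed

theorem theorem3p1:
  fixes \<psi> :: "real \<Rightarrow> real" and \<theta>1 \<theta>2 :: real
  assumes "piecewise_smooth \<psi>"
    and "\<theta>1 \<noteq> \<theta>2" and "\<theta>1 \<in> {0<..<pi}" and "\<theta>2 \<in> {0<..<pi}"
    and "\<forall>\<theta>\<in>{\<theta>1, \<theta>2}.
           filterlim (\<lambda>s. \<psi> s * sin \<theta> + s * cos \<theta>) at_top at_top \<and>
           filterlim (\<lambda>s. \<psi> s * sin \<theta> + s * cos \<theta>) at_top at_bot \<and>
           (\<exists>!s. is_local_min (\<lambda>s. \<psi> s * sin \<theta> + s * cos \<theta>) s)"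
  shows "HUP_graph \<psi> (line \<theta>1 \<union> line \<theta>2)"
  unfolding HUP_graph_def
proof (intro allI impI)
  fix f :: "real \<times> real \<Rightarrow> complex"
  assume f: "integrable (arclen \<psi>) f"
    and zero: "\<forall>\<xi>\<in>line \<theta>1 \<union> line \<theta>2. fourier_dens (arclen \<psi>) f \<xi> = 0"
  have cont: "continuous_on UNIV \<psi>" using assms(1) by (simp add: piecewise_smooth_def)
  have f_measurable: "f \<in> borel_measurable borel"
    using borel_measurable_integrable[OF f] by (simp add: arclen_eq_distr)
  have "AE s in arclen_param \<psi>. f (s, \<psi> s) = 0"
  proof (rule AE_arclen_param_eq_0_if_fourier_eq_0[OF assms(1-4) assms(5)[folded graph_proj_def]])
    show "integrable (arclen_param \<psi>) (\<lambda>s. f (s, \<psi> s))"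
      using f integrable_distr_eq[OF measurable_graph[OF cont] f_measurable]
      by (simp add: arclen_eq_distr)
    fix \<theta> t assume "\<theta> \<in> {\<theta>1, \<theta>2}"
    moreover have "(- t * cos \<theta>, - t * sin \<theta>) \<in> line \<theta>" unfolding line_def by blast
    ultimately show "(CLINT s|arclen_param \<psi>. iexp (t * graph_proj \<psi> \<theta> s) * f (s, \<psi> s)) = 0"
      using zero fourier_dens_arclen_line[OF cont f_measurable, of "- t" \<theta>] by auto
  qed
  then show "AE p in arclen \<psi>. f p = 0"
    unfolding arclen_eq_distr using f_measurable
    by (simp add: AE_distr_iff[OF measurable_graph[OF cont]])
qed

end
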